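(* Let $X$ be a metric space, $\alpha\in\mathbb R$, and $\varphi\colon(0,\infty)\to[0,\infty)$ a function such that $\epsilon_{X;p}(S)\le\varphi(S)\,S^{\alpha/p}$ for all $p\in[1,\infty)$ and all $S>0$. Then for every $p\in[1,\infty)$ and every $S\ge e^p$, $$\epsilon_{X;p}(S)\le \frac{e^\alpha}{p}\,\varphi(S)\log S.$$
   Context: For a metric space $(X,d)$ and $1\le p<\infty$, $\ell^p(X)$ is the space of $p$-summable real functions on $X$ and $\ell^p_1(X)$ its unit sphere. For a map $\xi\colon X\to\ell^p(X)$, written $x\mapsto\xi_x$, put $S(\xi)=\sup\{d(x,y):\xi_x(y)\neq0\}$ and $\varepsilon(\xi;p)=\sup_{x\ne y}\|\xi_x-\xi_y\|_p/d(x,y)$. The profile is $\epsilon_{X;p}(S)=\inf\{\varepsilon(\xi;p):\xi\colon X\to\ell^p_1(X),\ S(\xi)\le S\}$. *)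

theory Defs
  imports "HOL-Analysis.Analysis" "HOL-Library.Extended_Real"
begin

text \<open>The metric space X is the type 'a (class metric_space), with d = dist.
  Elements of ell^p(X) are functions 'a \<Rightarrow> real whose p-th powers of absolute values are summable.\<close>

definition lp_space :: "real \<Rightarrow> ('a \<Rightarrow> real) set" where
  "lp_space p = {f. (\<lambda>y. \<bar>f y\<bar> powr p) summable_on UNIV}"

definition lp_norm :: "real \<Rightarrow> ('a \<Rightarrow> real) \<Rightarrow> real" where
  "lp_norm p f = (\<Sum>\<^sub>\<infinity>y. \<bar>f y\<bar> powr p) powr (1 / p)"

definition lp_sphere :: "real \<Rightarrow> ('a \<Rightarrow> real) set" where
  "lp_sphere p = {f \<in> lp_space p. lp_norm p f = 1}"

definition prop_radius :: "('a::metric_space \<Rightarrow> 'a \<Rightarrow> real) \<Rightarrow> ereal" where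
  "prop_radius \<xi> = Sup {ereal (dist x y) | x y. \<xi> x y \<noteq> 0}"

text \<open>epsilon(xi;p) = sup_{x \<noteq> y} ||xi_x - xi_y||_p / d(x,y) (in the extended reals;
  the value 0 is included so that the supremum over an empty index set is 0).\<close>
definition lip_const :: "('a::metric_space \<Rightarrow> 'a \<Rightarrow> real) \<Rightarrow> real \<Rightarrow> ereal" where
  "lip_const \<xi> p = Sup (insert 0 {ereal (lp_norm p (\<lambda>z. \<xi> x z - \<xi> y z) / dist x y) | x y. x \<noteq> y})"

text \<open>The profile epsilon_{X;p}(S) (infimum over an empty set is +infinity).\<close>
definition profile :: "'a::metric_space itself \<Rightarrow> real \<Rightarrow> real \<Rightarrow> ereal" where
  "profile X p S = Inf {lip_const \<xi> p | \<xi> :: 'a \<Rightarrow> 'a \<Rightarrow> real.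
       (\<forall>x. \<xi> x \<in> lp_sphere p) \<and> prop_radius \<xi> \<le> ereal S}"

end

theory Submission
  imports Defs
begin

(* For 1 <= p <= q the Mazur map t |-> sgn t * |t| powr (q/p), applied pointwise, sends the
   unit sphere of l^q onto that of l^p without changing supports, and it is (q/p)-Lipschitz
   from the l^q to the l^p norm: pointwise
     |M a - M b| <= (q/p) |a - b| ((|a|^q + |b|^q)/2) powr ((q - p)/(p q)),
   and Hoelder's inequality sums this up. Composing a competitor for the profile at exponent q
   with it gives eps_p(S) <= (q/p) eps_q(S). For S >= e^p take q = ln S >= p; then
   S powr (alpha/q) = e^alpha, and the hypothesis at exponent q gives the claim. *)

lemma Youngs_inequality_nonneg:
  fixes x y \<theta> :: real
  assumes "0 \<le> x" "0 \<le> y" "0 \<le> \<theta>" "\<theta> \<le> 1"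
  shows "x powr \<theta> * y powr (1 - \<theta>) \<le> \<theta> * x + (1 - \<theta>) * y"
proof (cases "x = 0 \<or> y = 0")
  case True
  then show ?thesis using assms by auto
next
  case False
  then show ?thesis using assms Youngs_inequality_0[of \<theta> "1 - \<theta>" x y] by auto
qed

lemma Youngs_inequality_scaled:
  fixes x y t \<theta> :: real
  assumes "0 \<le> x" "0 \<le> y" "0 < t" "0 \<le> \<theta>" "\<theta> \<le> 1"
  shows "x powr \<theta> * y powr (1 - \<theta>) \<le> t powr \<theta> * (\<theta> / t * x + (1 - \<theta>) * y)"
proof -
  have "x powr \<theta> * y powr (1 - \<theta>) = t powr \<theta> * ((x / t) powr \<theta> * y powr (1 - \<theta>))"
    using assms by (simp add: powr_divide)
  also have "\<dots> \<le> t powr \<theta> * (\<theta> / t * x + (1 - \<theta>) * y)"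
    using Youngs_inequality_nonneg[of "x / t" y \<theta>] assms by (intro mult_left_mono) auto
  finally show ?thesis .
qed

lemma powr_le_tangent:
  fixes x K \<theta> :: real
  assumes "0 \<le> x" "0 < K" "0 \<le> \<theta>" "\<theta> \<le> 1"
  shows "x powr \<theta> \<le> K powr \<theta> * (\<theta> * x / K + (1 - \<theta>))"
proof -
  have "(x / K) powr \<theta> \<le> \<theta> * (x / K) + (1 - \<theta>)"
    using Youngs_inequality_nonneg[of "x / K" 1 \<theta>] assms by simp
  then show ?thesis
    using assms by (simp add: powr_divide divide_le_eq mult.commute)
qed

lemma convex_on_powr_nonneg:
  fixes q :: real
  assumes "1 \<le> q"
  shows "convex_on {0..} (\<lambda>x. x powr q)"
proof -
  have vertex: "(t * x) powr q \<le> t * x powr q" if "0 \<le> t" "t \<le> 1" "0 \<le> x" for t x :: real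
  proof -
    have "t powr q \<le> t"
      using that assms powr_le_one_le[of t q] by (cases "t = 0") auto
    then show ?thesis
      using that by (simp add: powr_mult mult_right_mono)
  qed
  show ?thesis
  proof (rule convex_onI)
    fix t x y :: real
    assume t: "0 < t" "t < 1" and xy: "x \<in> {0..}" "y \<in> {0..}"
    consider "x = 0" | "y = 0" | "0 < x" "0 < y"
      using xy by fastforce
    then show "((1 - t) *\<^sub>R x + t *\<^sub>R y) powr q \<le> (1 - t) * x powr q + t * y powr q"
    proof cases
      case 1
      then show ?thesis using vertex[of t y] t xy assms by simp
    next
      case 2
      then show ?thesis using vertex[of "1 - t" x] t xy assms by simp
    next
      case 3
      then show ?thesis using convex_onD[OF powr_convex[OF assms], of t x y] t by simp
    qed
  qed simp
qed

lemma powr_on_segment_le: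
  fixes a b t q \<theta> K :: real
  assumes "0 \<le> b" "b \<le> a" "0 \<le> t" "t \<le> 1" "1 \<le> q" "0 \<le> \<theta>" "\<theta> \<le> 1" "0 < K"
  shows "(b + t * (a - b)) powr (q * \<theta>)
           \<le> K powr \<theta> * (\<theta> / K * ((1 - t) * b powr q + t * a powr q) + (1 - \<theta>))"
proof -
  define c where "c = b + t * (a - b)"
  have "c \<ge> 0"
    using assms by (simp add: c_def)
  have "c powr (q * \<theta>) = (c powr q) powr \<theta>"
    by (simp add: powr_powr)
  also have "\<dots> \<le> K powr \<theta> * (\<theta> * c powr q / K + (1 - \<theta>))"
    using assms by (intro powr_le_tangent) auto
  also have "\<dots> \<le> K powr \<theta> * (\<theta> / K * ((1 - t) * b powr q + t * a powr q) + (1 - \<theta>))"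
  proof -
    have "c powr q \<le> (1 - t) * b powr q + t * a powr q"
      using convex_onD[OF convex_on_powr_nonneg, of q t b a] assms by (simp add: c_def algebra_simps)
    then show ?thesis
      using assms by (auto intro!: mult_left_mono add_right_mono divide_right_mono)
  qed
  finally show ?thesis
    unfolding c_def .
qed

text \<open>With c t = b + t (a - b), the difference a^r - b^r is the integral of r (a - b) (c t)^(r-1)
  over [0,1]. Lemma powr_on_segment_le (tangent of x^\<theta> at the power mean K, then convexity of x^q)
  bounds (c t)^(r-1) by an integrand g t whose primitive G has G 0 = 0 and G 1 = K^\<theta>; hence
  h = r (a - b) G - c^r is increasing on [0,1].\<close>

lemma powr_diff_le_power_mean:
  fixes a b r q :: real
  assumes "0 \<le> b" "b \<le> a" "1 \<le> r" "r \<le> q"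
  shows "a powr r - b powr r \<le> r * (a - b) * ((a powr q + b powr q) / 2) powr ((r - 1) / q)"
proof (cases "a = 0")
  case True
  then show ?thesis using assms by auto
next
  case False
  define K where "K = (a powr q + b powr q) / 2"
  define \<theta> where "\<theta> = (r - 1) / q"
  define c where "c t = b + t * (a - b)" for t
  define g where "g t = K powr \<theta> * (\<theta> / K * ((1 - t) * b powr q + t * a powr q) + (1 - \<theta>))" for t
  define G where
    "G t = K powr \<theta> * (\<theta> / K * (b powr q * (t - t\<^sup>2 / 2) + a powr q * t\<^sup>2 / 2) + (1 - \<theta>) * t)" for t
  define h where "h t = r * (a - b) * G t - c t powr r" for t
  have "a > 0" "q \<ge> 1" using False assms by auto
  then have K: "K > 0" unfolding K_def using assms by (simp add: add_pos_nonneg)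
  have \<theta>: "0 \<le> \<theta>" "\<theta> \<le> 1" unfolding \<theta>_def using assms by (auto simp: field_simps)
  have "h 0 \<le> h 1"
  proof (rule DERIV_nonneg_imp_increasing_open[of 0 1 h])
    fix t :: real
    assume t: "0 < t" "t < 1"
    have c_pos: "c t > 0"
      unfolding c_def using t \<open>a > 0\<close> assms by (smt (verit) mult_nonneg_nonneg mult_pos_pos)
    have "(G has_real_derivative g t) (at t)" unfolding G_def g_def
      by (rule derivative_eq_intros refl | simp)+
    moreover have "(c has_real_derivative (a - b)) (at t)" unfolding c_def
      by (rule derivative_eq_intros refl | simp)+
    ultimately have "(h has_real_derivative r * (a - b) * g t - r * c t powr (r - 1) * (a - b)) (at t)"
      unfolding h_def using DERIV_fun_powr[of c "a - b" t r] c_pos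
      by (intro DERIV_diff DERIV_cmult) auto
    then have dh: "(h has_real_derivative r * (a - b) * (g t - c t powr (r - 1))) (at t)"
      by (simp add: algebra_simps)
    have "c t powr (r - 1) \<le> g t"
      using powr_on_segment_le[of b a t q \<theta> K] t assms \<open>q \<ge> 1\<close> \<theta> K
      by (simp add: c_def g_def \<theta>_def)
    then have "0 \<le> r * (a - b) * (g t - c t powr (r - 1))"
      using assms by simp
    then show "\<exists>y. (h has_real_derivative y) (at t) \<and> 0 \<le> y"
      using dh by blast
  next
    show "continuous_on {0..1} h"
      unfolding h_def G_def c_def
    proof (intro continuous_on_diff continuous_on_powr')
      show "\<forall>x\<in>{0..1}. 0 \<le> b + x * (a - b) \<and> (b + x * (a - b) = 0 \<longrightarrow> 0 < r)"
        using assms by auto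
    qed (intro continuous_intros | simp)+
  qed simp
  moreover have "G 0 = 0" "G 1 = K powr \<theta>"
    unfolding G_def using K by (simp_all add: K_def field_simps)
  ultimately show ?thesis
    unfolding h_def c_def K_def [symmetric] \<theta>_def [symmetric] by simp
qed

lemma powr_le_power_mean:
  fixes x K r q :: real
  assumes "0 \<le> x" "x powr q \<le> 2 * K" "1 \<le> r" "r \<le> q"
  shows "x powr r \<le> r * x * K powr ((r - 1) / q)"
proof -
  have "x powr r \<le> r * x * (x powr q / 2) powr ((r - 1) / q)"
    using powr_diff_le_power_mean[of 0 x r q] assms by simp
  also have "\<dots> \<le> r * x * K powr ((r - 1) / q)"
    using assms by (intro mult_left_mono powr_mono2) auto
  finally show ?thesis .
qed

definition mazur_map :: "real \<Rightarrow> real \<Rightarrow> real" where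
  "mazur_map r t = sgn t * \<bar>t\<bar> powr r"

lemma mazur_map_eq_0_iff [simp]: "r > 0 \<Longrightarrow> mazur_map r t = 0 \<longleftrightarrow> t = 0"
  by (auto simp: mazur_map_def sgn_if)

lemma abs_mazur_map_powr: "p > 0 \<Longrightarrow> \<bar>mazur_map (q / p) t\<bar> powr p = \<bar>t\<bar> powr q"
  by (cases "t = 0") (auto simp: mazur_map_def abs_mult powr_powr)

lemma mazur_map_diff_le:
  fixes a b r q :: real
  assumes "1 \<le> r" "r \<le> q"
  shows "\<bar>mazur_map r a - mazur_map r b\<bar>
           \<le> r * \<bar>a - b\<bar> * ((\<bar>a\<bar> powr q + \<bar>b\<bar> powr q) / 2) powr ((r - 1) / q)"
proof (induction a b rule: linorder_wlog)
  case (le a b)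
  define K where "K = (\<bar>a\<bar> powr q + \<bar>b\<bar> powr q) / 2"
  consider "0 \<le> a" | "b \<le> 0" | "a < 0" "0 < b"
    by linarith
  then show ?case
  proof cases
    case 1
    have "\<bar>mazur_map r a - mazur_map r b\<bar> = b powr r - a powr r"
      using 1 le powr_mono2[of r a b] assms by (auto simp: mazur_map_def sgn_if)
    then show ?thesis
      using powr_diff_le_power_mean[of a b r q] 1 le assms by (simp add: add.commute)
  next
    case 2
    have "\<bar>mazur_map r a - mazur_map r b\<bar> = (-a) powr r - (-b) powr r"
      using 2 le powr_mono2[of r "-b" "-a"] assms by (auto simp: mazur_map_def sgn_if)
    then show ?thesis
      using powr_diff_le_power_mean[of "-b" "-a" r q] 2 le assms by simp
  next
    case 3
    have "\<bar>mazur_map r a - mazur_map r b\<bar> = (-a) powr r + b powr r"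
      using 3 by (simp add: mazur_map_def) (smt (verit) powr_ge_zero)
    also have "\<dots> \<le> r * (-a) * K powr ((r - 1) / q) + r * b * K powr ((r - 1) / q)"
      using 3 assms by (intro add_mono powr_le_power_mean) (auto simp: K_def)
    finally show ?thesis
      using 3 by (simp add: K_def algebra_simps)
  qed
next
  case (sym a b)
  then show ?case by (simp add: abs_minus_commute add.commute)
qed

lemma abs_mazur_map_diff_powr_le:
  fixes a b p q :: real
  assumes "1 \<le> p" "p \<le> q"
  shows "\<bar>mazur_map (q / p) a - mazur_map (q / p) b\<bar> powr p
           \<le> (q / p) powr p * ((\<bar>a - b\<bar> powr q) powr (p / q)
               * ((\<bar>a\<bar> powr q + \<bar>b\<bar> powr q) / 2) powr (1 - p / q))"
proof -
  define r where "r = q / p"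
  define K where "K = (\<bar>a\<bar> powr q + \<bar>b\<bar> powr q) / 2"
  have "p > 0" "q > 0" "1 \<le> r" "r \<le> q"
    using assms by (auto simp: r_def field_simps)
  have "\<bar>mazur_map r a - mazur_map r b\<bar> powr p \<le> (r * \<bar>a - b\<bar> * K powr ((r - 1) / q)) powr p"
    unfolding K_def
    using mazur_map_diff_le[OF \<open>1 \<le> r\<close> \<open>r \<le> q\<close>] \<open>p > 0\<close> by (intro powr_mono2) auto
  also have "\<dots> = r powr p * (\<bar>a - b\<bar> powr p * (K powr ((r - 1) / q)) powr p)"
    using \<open>1 \<le> r\<close> by (simp add: powr_mult)
  also have "\<dots> = r powr p * ((\<bar>a - b\<bar> powr q) powr (p / q) * K powr (1 - p / q))"
  proof -
    have "(r - 1) / q * p = 1 - p / q"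
      using \<open>p > 0\<close> \<open>q > 0\<close> by (simp add: r_def field_simps)
    then show ?thesis
      using \<open>q > 0\<close> by (simp add: powr_powr)
  qed
  finally show ?thesis
    unfolding r_def K_def .
qed

lemma infsum_powr_mult_powr_le:
  fixes A K :: "'b \<Rightarrow> real"
  assumes A: "A summable_on I" "\<And>y. y \<in> I \<Longrightarrow> 0 \<le> A y"
    and K: "K summable_on I" "\<And>y. y \<in> I \<Longrightarrow> 0 \<le> K y" "infsum K I = 1"
    and \<theta>: "0 < \<theta>" "\<theta> \<le> 1"
  shows "(\<lambda>y. A y powr \<theta> * K y powr (1 - \<theta>)) summable_on I"
    and "(\<Sum>\<^sub>\<infinity>y\<in>I. A y powr \<theta> * K y powr (1 - \<theta>)) \<le> infsum A I powr \<theta>"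
proof -
  define t where "t = infsum A I"
  define H where "H y = A y powr \<theta> * K y powr (1 - \<theta>)" for y
  have H_nonneg: "0 \<le> H y" for y unfolding H_def by simp
  have "H summable_on I \<and> infsum H I \<le> t powr \<theta>"
  proof (cases "t = 0")
    case True
    then have "A y = 0" if "y \<in> I" for y
      using nonneg_infsum_le_0D[OF _ A] that unfolding t_def by auto
    then have "H y = 0" if "y \<in> I" for y
      using that \<theta> unfolding H_def by simp
    then show ?thesis
      using True by (simp add: summable_on_0 infsum_0)
  next
    case False
    then have "t > 0" unfolding t_def using A by (simp add: order_less_le infsum_nonneg)
    define E where "E y = t powr \<theta> * (\<theta> / t * A y + (1 - \<theta>) * K y)" for y
    have H_le_E: "H y \<le> E y" if "y \<in> I" for y
      unfolding H_def E_def using Youngs_inequality_scaled \<open>t > 0\<close> A K \<theta> that by simp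
    have E_summable: "E summable_on I"
      unfolding E_def by (intro summable_on_cmult_right summable_on_add A K)
    have "infsum E I = t powr \<theta> * (\<theta> / t * infsum A I + (1 - \<theta>) * infsum K I)"
      unfolding E_def
      by (simp only: infsum_cmult_right' infsum_add[OF summable_on_cmult_right[OF A(1)] summable_on_cmult_right[OF K(1)]])
    also have "\<dots> = t powr \<theta> * (\<theta> / t * t + (1 - \<theta>) * 1)"
      using K unfolding t_def by simp
    also have "\<dots> = t powr \<theta>"
      using \<open>t > 0\<close> by simp
    finally show ?thesis
      using summable_on_comparison_test[OF E_summable H_le_E H_nonneg] infsum_mono[of H I E] H_le_E E_summable
      by auto
  qed
  then show "(\<lambda>y. A y powr \<theta> * K y powr (1 - \<theta>)) summable_on I"
    and "(\<Sum>\<^sub>\<infinity>y\<in>I. A y powr \<theta> * K y powr (1 - \<theta>)) \<le> infsum A I powr \<theta>"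
    unfolding H_def t_def by auto
qed

lemma lp_sphere_has_sum:
  assumes "f \<in> lp_sphere q" "q > 0"
  shows "((\<lambda>y. \<bar>f y\<bar> powr q) has_sum 1) UNIV"
proof -
  have "(\<Sum>\<^sub>\<infinity>y. \<bar>f y\<bar> powr q) powr (1 / q) = 1"
    using assms by (simp add: lp_sphere_def lp_norm_def)
  moreover have "(\<Sum>\<^sub>\<infinity>y. \<bar>f y\<bar> powr q) \<ge> 0"
    by (intro infsum_nonneg) auto
  ultimately have "(\<Sum>\<^sub>\<infinity>y. \<bar>f y\<bar> powr q) = 1"
    using assms powr_powr[of "\<Sum>\<^sub>\<infinity>y. \<bar>f y\<bar> powr q" "1 / q" q] by simp
  then show ?thesis
    using assms by (simp add: has_sum_iff lp_sphere_def lp_space_def)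
qed

lemma mazur_map_lp_sphere:
  assumes "f \<in> lp_sphere q" "0 < p" "0 < q"
  shows "(\<lambda>y. mazur_map (q / p) (f y)) \<in> lp_sphere p"
  using lp_sphere_has_sum[OF assms(1,3)]
  by (simp add: has_sum_iff lp_sphere_def lp_space_def lp_norm_def abs_mazur_map_powr assms(2))

lemma abs_diff_powr_le:
  fixes a b q :: real
  assumes "q > 0"
  shows "\<bar>a - b\<bar> powr q \<le> 2 powr q * (\<bar>a\<bar> powr q + \<bar>b\<bar> powr q)"
proof -
  have "\<bar>a - b\<bar> powr q \<le> (2 * max \<bar>a\<bar> \<bar>b\<bar>) powr q"
    using assms by (intro powr_mono2) auto
  also have "\<dots> \<le> 2 powr q * (\<bar>a\<bar> powr q + \<bar>b\<bar> powr q)"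
    by (auto simp: powr_mult max_def intro: mult_left_mono)
  finally show ?thesis .
qed

lemma lp_norm_mazur_map_diff_le:
  assumes f: "f \<in> lp_sphere q" and g: "g \<in> lp_sphere q" and "1 \<le> p" "p \<le> q"
  shows "lp_norm p (\<lambda>y. mazur_map (q / p) (f y) - mazur_map (q / p) (g y))
           \<le> q / p * lp_norm q (\<lambda>y. f y - g y)"
proof -
  define r where "r = q / p"
  have "p > 0" "q > 0" "r > 0"
    using assms by (auto simp: r_def)
  define A where "A y = \<bar>f y - g y\<bar> powr q" for y
  define K where "K y = (\<bar>f y\<bar> powr q + \<bar>g y\<bar> powr q) / 2" for y
  define D where "D y = \<bar>mazur_map r (f y) - mazur_map r (g y)\<bar> powr p" for y
  define H where "H y = A y powr (p / q) * K y powr (1 - p / q)" for y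
  have sum_fg: "((\<lambda>y. \<bar>f y\<bar> powr q + \<bar>g y\<bar> powr q) has_sum 2) UNIV"
    using has_sum_add[OF lp_sphere_has_sum[OF f] lp_sphere_has_sum[OF g]] \<open>q > 0\<close> by simp
  then have "(K has_sum 1) UNIV"
    unfolding K_def using has_sum_divide_const[OF sum_fg, of 2] by simp
  then have K_summable: "K summable_on UNIV" and "infsum K UNIV = 1"
    by (simp_all add: has_sum_iff)
  moreover have A_summable: "A summable_on UNIV"
  proof (rule summable_on_comparison_test)
    show "(\<lambda>y. 2 powr q * (\<bar>f y\<bar> powr q + \<bar>g y\<bar> powr q)) summable_on UNIV"
      using sum_fg by (intro summable_on_cmult_right) (simp add: has_sum_iff)
  qed (auto simp: A_def abs_diff_powr_le \<open>q > 0\<close>)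
  ultimately have H: "H summable_on UNIV" "infsum H UNIV \<le> infsum A UNIV powr (p / q)"
    using infsum_powr_mult_powr_le[OF A_summable _ K_summable] \<open>p > 0\<close> assms
    unfolding H_def by (auto simp: A_def K_def)
  have D_le_H: "D y \<le> r powr p * H y" for y
    unfolding D_def H_def A_def K_def r_def using abs_mazur_map_diff_powr_le[OF assms(3,4)] .
  have "D summable_on UNIV"
    by (rule summable_on_comparison_test[OF summable_on_cmult_right[OF H(1)] D_le_H])
      (simp add: D_def)
  then have "infsum D UNIV \<le> r powr p * infsum H UNIV"
    using infsum_mono[OF _ summable_on_cmult_right[OF H(1)] D_le_H]
    by (simp add: infsum_cmult_right')
  also have "\<dots> \<le> r powr p * infsum A UNIV powr (p / q)"
    using H by (simp add: mult_left_mono)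
  finally have "infsum D UNIV powr (1 / p) \<le> (r powr p * infsum A UNIV powr (p / q)) powr (1 / p)"
    using \<open>p > 0\<close> by (intro powr_mono2) (auto simp: D_def infsum_nonneg)
  also have "\<dots> = r * infsum A UNIV powr (1 / q)"
    using \<open>p > 0\<close> \<open>r > 0\<close> by (simp add: powr_mult powr_powr infsum_nonneg A_def)
  finally show ?thesis
    unfolding lp_norm_def D_def [abs_def] A_def [abs_def] r_def by simp
qed

lemma lip_const_le_mult:
  fixes \<xi> \<eta> :: "'a::metric_space \<Rightarrow> 'a \<Rightarrow> real"
  assumes "r > 0"
    and "\<And>x y. lp_norm p (\<lambda>z. \<eta> x z - \<eta> y z) \<le> r * lp_norm q (\<lambda>z. \<xi> x z - \<xi> y z)"
  shows "lip_const \<eta> p \<le> ereal r * lip_const \<xi> q"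
  unfolding lip_const_def
proof (rule Sup_least)
  define L where "L = Sup (insert 0 {ereal (lp_norm q (\<lambda>z. \<xi> x z - \<xi> y z) / dist x y) |x y. x \<noteq> y})"
  fix e
  assume "e \<in> insert 0 {ereal (lp_norm p (\<lambda>z. \<eta> x z - \<eta> y z) / dist x y) |x y. x \<noteq> y}"
  then consider "e = 0"
    | x y where "x \<noteq> y" "e = ereal (lp_norm p (\<lambda>z. \<eta> x z - \<eta> y z) / dist x y)"
    by blast
  then show "e \<le> ereal r * L"
  proof cases
    case 1
    have "0 \<le> L" unfolding L_def by (rule Sup_upper) simp
    then show ?thesis using 1 \<open>r > 0\<close> by simp
  next
    case 2
    have "e \<le> ereal r * ereal (lp_norm q (\<lambda>z. \<xi> x z - \<xi> y z) / dist x y)"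
      using 2 assms(2)[of x y] by (simp add: divide_right_mono)
    also have "\<dots> \<le> ereal r * L"
      using 2 \<open>r > 0\<close> unfolding L_def by (intro ereal_mult_left_mono Sup_upper) auto
    finally show ?thesis .
  qed
qed

lemma profile_le_lip_const:
  fixes \<xi> :: "'a::metric_space \<Rightarrow> 'a \<Rightarrow> real"
  assumes "\<And>x. \<xi> x \<in> lp_sphere p" "prop_radius \<xi> \<le> ereal S"
  shows "profile TYPE('a) p S \<le> lip_const \<xi> p"
  unfolding profile_def using assms by (intro Inf_lower) blast

lemma prop_radius_mazur_map:
  "r > 0 \<Longrightarrow> prop_radius (\<lambda>x y. mazur_map r (\<xi> x y)) = prop_radius \<xi>"
  by (simp add: prop_radius_def)

lemma profile_le_mult_profile:
  assumes "1 \<le> p" "p \<le> q"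
  shows "profile TYPE('a::metric_space) p S \<le> ereal (q / p) * profile TYPE('a) q S"
proof -
  have "q / p > 0" "p > 0" "q > 0"
    using assms by auto
  define Lq where "Lq = {lip_const \<xi> q | \<xi> :: 'a \<Rightarrow> 'a \<Rightarrow> real.
    (\<forall>x. \<xi> x \<in> lp_sphere q) \<and> prop_radius \<xi> \<le> ereal S}"
  have "profile TYPE('a) p S \<le> ereal (q / p) * L" if "L \<in> Lq" for L
  proof -
    obtain \<xi> :: "'a \<Rightarrow> 'a \<Rightarrow> real"
      where \<xi>: "L = lip_const \<xi> q" "\<And>x. \<xi> x \<in> lp_sphere q" "prop_radius \<xi> \<le> ereal S"
      using \<open>L \<in> Lq\<close> unfolding Lq_def by blast
    have "profile TYPE('a) p S \<le> lip_const (\<lambda>x y. mazur_map (q / p) (\<xi> x y)) p"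
      using mazur_map_lp_sphere[OF \<xi>(2) \<open>p > 0\<close> \<open>q > 0\<close>] \<xi>(3)
      by (intro profile_le_lip_const) (simp_all add: prop_radius_mazur_map \<open>q / p > 0\<close>)
    also have "\<dots> \<le> ereal (q / p) * L"
      unfolding \<xi>(1)
      using lp_norm_mazur_map_diff_le[OF \<xi>(2) \<xi>(2) assms]
      by (intro lip_const_le_mult \<open>q / p > 0\<close>)
    finally show ?thesis .
  qed
  then have "profile TYPE('a) p S \<le> Inf {ereal (q / p) * L | L. L \<in> Lq}"
    by (intro Inf_greatest) blast
  also have "\<dots> = ereal (q / p) * profile TYPE('a) q S"
    using ereal_Inf_cmult[OF \<open>q / p > 0\<close>, of "\<lambda>L. L \<in> Lq"] by (simp add: profile_def Lq_def)
  finally show ?thesis .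
qed

theorem lemma2p3p2:
  fixes \<alpha> :: real and \<phi> :: "real \<Rightarrow> real"
  assumes phi_nonneg: "\<And>S. S > 0 \<Longrightarrow> \<phi> S \<ge> 0"
    and hyp: "\<And>p S. 1 \<le> p \<Longrightarrow> S > 0 \<Longrightarrow>
       profile TYPE('a::metric_space) p S \<le> ereal (\<phi> S * S powr (\<alpha> / p))"
  shows "\<And>p S. 1 \<le> p \<Longrightarrow> exp p \<le> S \<Longrightarrow>
       profile TYPE('a) p S \<le> ereal (exp \<alpha> / p * \<phi> S * ln S)"
proof -
  fix p S :: real
  assume "1 \<le> p" "exp p \<le> S"
  have "S > 0"
    using \<open>exp p \<le> S\<close> exp_gt_zero order_less_le_trans by blast
  then have "p \<le> ln S"
    using \<open>exp p \<le> S\<close> by (simp add: ln_ge_iff)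
  with \<open>1 \<le> p\<close> have "S powr (\<alpha> / ln S) = exp \<alpha>"
    using \<open>S > 0\<close> by (auto simp: powr_def)
  then have "profile TYPE('a) (ln S) S \<le> ereal (\<phi> S * exp \<alpha>)"
    using hyp[of "ln S" S] \<open>1 \<le> p\<close> \<open>p \<le> ln S\<close> \<open>S > 0\<close> by simp
  then have "ereal (ln S / p) * profile TYPE('a) (ln S) S \<le> ereal (ln S / p) * ereal (\<phi> S * exp \<alpha>)"
    using \<open>1 \<le> p\<close> \<open>p \<le> ln S\<close> by (intro ereal_mult_left_mono) auto
  then show "profile TYPE('a) p S \<le> ereal (exp \<alpha> / p * \<phi> S * ln S)"
    using profile_le_mult_profile[OF \<open>1 \<le> p\<close> \<open>p \<le> ln S\<close>, where 'a = 'a and S = S]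
    by (simp add: mult_ac)
qed

end
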